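(* Let $(M,\tau)$ be a Real manifold which is connected and simply connected. Then the sequence $$0 \longrightarrow H^0(M;\mathbb Z_2,\mathcal U(1)) \longrightarrow H^0(M,\mathcal U(1)) \xrightarrow{\ g\,\mapsto\, \bar g\,(g\circ\tau)\ } H^0(M;\mathbb Z_2,\overline{\mathcal U(1)}) \xrightarrow{\ \epsilon\ } \mathbb Z_2 \longrightarrow 0$$ is exact, where the first map is the inclusion and $\epsilon$ is defined as follows: for a Real map $f\colon M\to U(1)$ (i.e. $f\circ\tau=\bar f$) choose a smooth lift $\hat f\colon M\to\mathbb R$ with $f=e^{2\pi i\hat f}$; then $\hat f\circ\tau+\hat f$ is a constant integer $k$, and $\epsilon(f)=k \bmod 2$ (which is independent of the lift).
   Context: A Real manifold is a smooth manifold $M$ with a smooth involution $\tau\colon M\to M$. $\mathcal U(1)$ denotes the sheaf of smooth $U(1)$-valued functions on $M$; regarded as a $\mathbb Z_2$-sheaf it carries the action $f\mapsto f\circ\tau$, and $\overline{\mathcal U(1)}$ denotes the same sheaf with the $\mathbb Z_2$-action $f\mapsto \bar f\circ\tau$. $H^p(M;\mathbb Z_2,\mathcal S)$ denotes Grothendieck's equivariant sheaf cohomology and $H^p(M,\mathcal U(1))$ ordinary sheaf cohomology. Concretely, $H^0(M,\mathcal U(1))$ is the group of smooth maps $M\to U(1)$, $H^0(M;\mathbb Z_2,\mathcal U(1))$ is the subgroup of maps with $f\circ\tau=f$, and $H^0(M;\mathbb Z_2,\overline{\mathcal U(1)})$ the subgroup of maps with $f\circ\tau=\bar f$. *)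

theory Defs
  imports "HOL-Analysis.Analysis"
begin

fun smooth_k :: "nat \<Rightarrow> 'a::euclidean_space set \<Rightarrow> ('a \<Rightarrow> 'b::real_normed_vector) \<Rightarrow> bool" where
  "smooth_k 0 U f = continuous_on U f"
| "smooth_k (Suc n) U f =
     ((\<forall>x\<in>U. f differentiable (at x)) \<and>
      (\<forall>v. smooth_k n U (\<lambda>x. frechet_derivative f (at x) v)))"

definition smooth_open :: "'a::euclidean_space set \<Rightarrow> ('a \<Rightarrow> 'b::real_normed_vector) \<Rightarrow> bool" where
  "smooth_open U f \<longleftrightarrow> open U \<and> (\<forall>n. smooth_k n U f)"

definition smooth_on :: "'a::euclidean_space set \<Rightarrow> ('a \<Rightarrow> 'b::real_normed_vector) \<Rightarrow> bool" where
  "smooth_on S f \<longleftrightarrow>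
     (\<forall>x\<in>S. \<exists>U g. open U \<and> x \<in> U \<and> smooth_open U g \<and> (\<forall>y\<in>S \<inter> U. g y = f y))"

text \<open>Embedded smooth submanifold of the Euclidean space 'a, modelled on the
  Euclidean space 'b: every point has a smooth chart with smooth inverse onto an
  open subset of 'b.  (By Whitney's embedding theorem every smooth manifold is
  diffeomorphic to such a submanifold.)\<close>
definition smooth_submanifold :: "'a::euclidean_space set \<Rightarrow> 'b::euclidean_space itself \<Rightarrow> bool" where
  "smooth_submanifold S _ \<longleftrightarrow>
     (\<forall>x\<in>S. \<exists>V W (\<phi>::'a \<Rightarrow> 'b) \<psi>. open V \<and> x \<in> V \<and> open W \<and>
        homeomorphism (S \<inter> V) W \<phi> \<psi> \<and> smooth_on (S \<inter> V) \<phi> \<and> smooth_on W \<psi>)"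

definition smooth_involution :: "'a::euclidean_space set \<Rightarrow> ('a \<Rightarrow> 'a) \<Rightarrow> bool" where
  "smooth_involution S \<tau> \<longleftrightarrow> smooth_on S \<tau> \<and> \<tau> ` S \<subseteq> S \<and> (\<forall>x\<in>S. \<tau> (\<tau> x) = x)"

definition H0_U1 :: "'a::euclidean_space set \<Rightarrow> ('a \<Rightarrow> complex) set" where
  "H0_U1 S = {g. smooth_on S g \<and> (\<forall>x\<in>S. norm (g x) = 1)}"

definition H0_inv :: "'a::euclidean_space set \<Rightarrow> ('a \<Rightarrow> 'a) \<Rightarrow> ('a \<Rightarrow> complex) set" where
  "H0_inv S \<tau> = {g \<in> H0_U1 S. \<forall>x\<in>S. g (\<tau> x) = g x}"

definition H0_real :: "'a::euclidean_space set \<Rightarrow> ('a \<Rightarrow> 'a) \<Rightarrow> ('a \<Rightarrow> complex) set" where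
  "H0_real S \<tau> = {f \<in> H0_U1 S. \<forall>x\<in>S. f (\<tau> x) = cnj (f x)}"

definition real_map :: "('a \<Rightarrow> 'a) \<Rightarrow> ('a \<Rightarrow> complex) \<Rightarrow> ('a \<Rightarrow> complex)" where
  "real_map \<tau> g = (\<lambda>x. cnj (g x) * g (\<tau> x))"

definition is_lift :: "'a::euclidean_space set \<Rightarrow> ('a \<Rightarrow> complex) \<Rightarrow> ('a \<Rightarrow> real) \<Rightarrow> bool" where
  "is_lift S f h \<longleftrightarrow> smooth_on S h \<and>
     (\<forall>x\<in>S. f x = exp (2 * complex_of_real pi * \<i> * complex_of_real (h x)))"

definition eps :: "'a::euclidean_space set \<Rightarrow> ('a \<Rightarrow> 'a) \<Rightarrow> ('a \<Rightarrow> complex) \<Rightarrow> int" where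
  "eps S \<tau> f = (SOME k::int. \<exists>h. is_lift S f h \<and> (\<forall>x\<in>S. h (\<tau> x) + h x = of_int k)) mod 2"

end

theory Submission
  imports Defs
begin

text \<open>Since M is simply connected and locally path connected, every smooth f : M \<rightarrow> U(1) lifts to a
  smooth h with f = exp (2\<pi>i h).  For a Real map f the relation f \<circ> \<tau> = cnj f makes h \<circ> \<tau> + h a
  continuous integer-valued function, hence a constant k on the connected M; changing the lift by an
  integer c changes k by 2c, so k mod 2 is well defined and additive.  It vanishes exactly on the maps
  cnj g \<cdot> (g \<circ> \<tau>), and the constant map -1, with lift 1/2, has k = 1.\<close>

section \<open>Smooth maps on open sets\<close>

lemma smooth_k_subset: "smooth_k n U f \<Longrightarrow> V \<subseteq> U \<Longrightarrow> smooth_k n V f"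
  by (induction n arbitrary: f) (auto intro: continuous_on_subset)

lemma smooth_k_Suc_imp_smooth_k: "smooth_k (Suc n) U f \<Longrightarrow> smooth_k n U f"
proof (induction n arbitrary: f)
  case 0
  then show ?case
    by (auto intro!: continuous_at_imp_continuous_on differentiable_imp_continuous_within)
next
  case (Suc n)
  then show ?case by (metis smooth_k.simps(2))
qed

lemma smooth_k_Suc_has_derivative:
  "smooth_k (Suc n) U f \<Longrightarrow> x \<in> U \<Longrightarrow> (f has_derivative frechet_derivative f (at x)) (at x)"
  using frechet_derivative_works by auto

lemma smooth_k_cong:
  "open U \<Longrightarrow> (\<And>x. x \<in> U \<Longrightarrow> f x = g x) \<Longrightarrow> smooth_k n U f \<Longrightarrow> smooth_k n U g"
proof (induction n arbitrary: f g)
  case 0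
  then show ?case by (metis continuous_on_cong smooth_k.simps(1))
next
  case (Suc n)
  have deriv: "(g has_derivative frechet_derivative f (at x)) (at x)" if "x \<in> U" for x
    using has_derivative_transform_within_open[OF smooth_k_Suc_has_derivative[OF Suc.prems(3) that]]
      Suc.prems(1,2) that by blast
  then have "g differentiable (at x)" if "x \<in> U" for x
    using that by (auto simp: differentiable_def)
  moreover have "frechet_derivative g (at x) = frechet_derivative f (at x)" if "x \<in> U" for x
    using deriv[OF that] frechet_derivative_at by metis
  then have "smooth_k n U (\<lambda>x. frechet_derivative g (at x) v)" for v
    using Suc.IH[OF Suc.prems(1), of "\<lambda>x. frechet_derivative f (at x) v"] Suc.prems(3) by simp
  ultimately show ?case by simp
qed

lemma smooth_k_SucI:
  assumes "open U" "\<And>x. x \<in> U \<Longrightarrow> (f has_derivative D x) (at x)" "\<And>v. smooth_k n U (\<lambda>x. D x v)"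
  shows "smooth_k (Suc n) U f"
proof -
  have "frechet_derivative f (at x) = D x" if "x \<in> U" for x
    using assms(2)[OF that] frechet_derivative_at by metis
  then show ?thesis
    using assms smooth_k_cong[OF assms(1), of "\<lambda>x. D x _" "\<lambda>x. frechet_derivative f (at x) _"]
    by (auto simp: differentiable_def)
qed

lemma smooth_k_const: "open U \<Longrightarrow> smooth_k n U (\<lambda>x. c)"
proof (induction n arbitrary: c)
  case (Suc n)
  then show ?case by (intro smooth_k_SucI[where D="\<lambda>x v. 0"]) auto
qed simp

lemma smooth_k_bounded_linear:
  "open U \<Longrightarrow> bounded_linear L \<Longrightarrow> smooth_k n U f \<Longrightarrow> smooth_k n U (\<lambda>x. L (f x))"
proof (induction n arbitrary: f)
  case 0
  then show ?case by (auto intro: continuous_on_compose2[OF linear_continuous_on])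
next
  case (Suc n)
  show ?case
  proof (rule smooth_k_SucI[where D="\<lambda>x v. L (frechet_derivative f (at x) v)"])
    show "((\<lambda>x. L (f x)) has_derivative (\<lambda>v. L (frechet_derivative f (at x) v))) (at x)"
      if "x \<in> U" for x
      using bounded_linear.has_derivative[OF Suc.prems(2) smooth_k_Suc_has_derivative] Suc.prems that
      by blast
  qed (use Suc in simp_all)
qed

lemma smooth_k_add:
  "open U \<Longrightarrow> smooth_k n U f \<Longrightarrow> smooth_k n U g \<Longrightarrow> smooth_k n U (\<lambda>x. f x + g x)"
proof (induction n arbitrary: f g)
  case 0
  then show ?case by (auto intro: continuous_on_add)
next
  case (Suc n)
  show ?case
  proof (rule smooth_k_SucI
      [where D="\<lambda>x v. frechet_derivative f (at x) v + frechet_derivative g (at x) v"])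
    show "((\<lambda>x. f x + g x) has_derivative
        (\<lambda>v. frechet_derivative f (at x) v + frechet_derivative g (at x) v)) (at x)" if "x \<in> U" for x
      using has_derivative_add[OF smooth_k_Suc_has_derivative smooth_k_Suc_has_derivative] Suc.prems that
      by blast
  qed (use Suc in simp_all)
qed

lemma smooth_k_sum:
  assumes "open U" "finite I" "\<And>i. i \<in> I \<Longrightarrow> smooth_k n U (F i)"
  shows "smooth_k n U (\<lambda>x. \<Sum>i\<in>I. F i x)"
  using assms(2,3)
  by (induction I rule: finite_induct) (simp_all add: smooth_k_const smooth_k_add assms(1))

lemma smooth_k_bounded_bilinear:
  "open U \<Longrightarrow> bounded_bilinear B \<Longrightarrow> smooth_k n U f \<Longrightarrow> smooth_k n U g \<Longrightarrow>
    smooth_k n U (\<lambda>x. B (f x) (g x))"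
proof (induction n arbitrary: f g)
  case 0
  then show ?case by (auto intro: bounded_bilinear.continuous_on)
next
  case (Suc n)
  have "smooth_k n U f" "smooth_k n U g"
    using Suc.prems smooth_k_Suc_imp_smooth_k by blast+
  show ?case
  proof (rule smooth_k_SucI[where D="\<lambda>x v. B (f x) (frechet_derivative g (at x) v)
                                          + B (frechet_derivative f (at x) v) (g x)"])
    show "((\<lambda>x. B (f x) (g x)) has_derivative (\<lambda>v. B (f x) (frechet_derivative g (at x) v)
        + B (frechet_derivative f (at x) v) (g x))) (at x)" if "x \<in> U" for x
      using bounded_bilinear.FDERIV[OF Suc.prems(2) smooth_k_Suc_has_derivative smooth_k_Suc_has_derivative]
        Suc.prems that by blast
    show "smooth_k n U (\<lambda>x. B (f x) (frechet_derivative g (at x) v)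
        + B (frechet_derivative f (at x) v) (g x))" for v
    proof (rule smooth_k_add[OF Suc.prems(1)])
      show "smooth_k n U (\<lambda>x. B (f x) (frechet_derivative g (at x) v))"
        by (rule Suc.IH[OF Suc.prems(1,2) \<open>smooth_k n U f\<close>]) (use Suc.prems in simp)
      show "smooth_k n U (\<lambda>x. B (frechet_derivative f (at x) v) (g x))"
        by (rule Suc.IH[OF Suc.prems(1,2) _ \<open>smooth_k n U g\<close>]) (use Suc.prems in simp)
    qed
  qed (use Suc in simp)
qed

lemma smooth_k_mult:
  fixes f g :: "_ \<Rightarrow> 'b::real_normed_algebra"
  shows "open U \<Longrightarrow> smooth_k n U f \<Longrightarrow> smooth_k n U g \<Longrightarrow> smooth_k n U (\<lambda>x. f x * g x)"
  by (rule smooth_k_bounded_bilinear[OF _ bounded_bilinear_mult])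

lemma smooth_k_inverse:
  fixes f :: "_ \<Rightarrow> 'b::real_normed_div_algebra"
  shows "open U \<Longrightarrow> smooth_k n U f \<Longrightarrow> (\<And>x. x \<in> U \<Longrightarrow> f x \<noteq> 0) \<Longrightarrow>
    smooth_k n U (\<lambda>x. inverse (f x))"
proof (induction n arbitrary: f)
  case 0
  then show ?case by (auto intro: continuous_on_inverse)
next
  case (Suc n)
  have "smooth_k n U (\<lambda>x. inverse (f x))"
    using Suc smooth_k_Suc_imp_smooth_k by blast
  show ?case
  proof (rule smooth_k_SucI
      [where D="\<lambda>x v. - (inverse (f x) * frechet_derivative f (at x) v * inverse (f x))"])
    show "((\<lambda>x. inverse (f x)) has_derivative
        (\<lambda>v. - (inverse (f x) * frechet_derivative f (at x) v * inverse (f x)))) (at x)" if "x \<in> U" for x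
      using Deriv.has_derivative_inverse[OF Suc.prems(3)[OF that]
          smooth_k_Suc_has_derivative[OF Suc.prems(2) that]] .
    show "smooth_k n U (\<lambda>x. - (inverse (f x) * frechet_derivative f (at x) v * inverse (f x)))" for v
      using Suc.prems \<open>smooth_k n U (\<lambda>x. inverse (f x))\<close>
      by (intro smooth_k_bounded_linear[OF _ bounded_linear_minus[OF bounded_linear_ident]]
          smooth_k_mult) simp_all
  qed (use Suc in simp)
qed

lemma smooth_k_exp:
  fixes f :: "_ \<Rightarrow> complex"
  shows "open U \<Longrightarrow> smooth_k n U f \<Longrightarrow> smooth_k n U (\<lambda>x. exp (f x))"
proof (induction n arbitrary: f)
  case 0
  then show ?case by (auto intro: continuous_on_exp)
next
  case (Suc n)
  have "smooth_k n U (\<lambda>x. exp (f x))"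
    using Suc smooth_k_Suc_imp_smooth_k by blast
  show ?case
  proof (rule smooth_k_SucI[where D="\<lambda>x v. exp (f x) * frechet_derivative f (at x) v"])
    show "((\<lambda>x. exp (f x)) has_derivative (\<lambda>v. exp (f x) * frechet_derivative f (at x) v)) (at x)"
      if "x \<in> U" for x
      using has_derivative_compose[OF smooth_k_Suc_has_derivative[OF Suc.prems(2) that]
          DERIV_exp[unfolded has_field_derivative_def]] .
    show "smooth_k n U (\<lambda>x. exp (f x) * frechet_derivative f (at x) v)" for v
      using Suc.prems \<open>smooth_k n U (\<lambda>x. exp (f x))\<close> by (intro smooth_k_mult) simp_all
  qed (use Suc in simp)
qed

lemma smooth_k_Ln:
  fixes f :: "_ \<Rightarrow> complex"
  assumes "open U" "smooth_k n U f" "\<And>x. x \<in> U \<Longrightarrow> f x \<notin> \<real>\<^sub>\<le>\<^sub>0"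
  shows "smooth_k n U (\<lambda>x. Ln (f x))"
proof (cases n)
  case 0
  then show ?thesis using assms by (auto intro: continuous_on_Ln')
next
  case (Suc m)
  have "f x \<noteq> 0" if "x \<in> U" for x
    using assms(3)[OF that] by auto
  then have "smooth_k m U (\<lambda>x. inverse (f x))"
    using assms(1,2) Suc smooth_k_inverse smooth_k_Suc_imp_smooth_k by blast
  show ?thesis
    unfolding Suc
  proof (rule smooth_k_SucI[where D="\<lambda>x v. inverse (f x) * frechet_derivative f (at x) v"])
    show "((\<lambda>x. Ln (f x)) has_derivative (\<lambda>v. inverse (f x) * frechet_derivative f (at x) v)) (at x)"
      if "x \<in> U" for x
      using has_derivative_compose[OF smooth_k_Suc_has_derivative[OF assms(2)[unfolded Suc] that]
          has_field_derivative_Ln[OF assms(3)[OF that], unfolded has_field_derivative_def]] .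
    show "smooth_k m U (\<lambda>x. inverse (f x) * frechet_derivative f (at x) v)" for v
      using assms Suc \<open>smooth_k m U (\<lambda>x. inverse (f x))\<close> by (intro smooth_k_mult) simp_all
  qed (use assms in simp)
qed

lemma smooth_k_compose:
  fixes T :: "'a::euclidean_space \<Rightarrow> 'c::euclidean_space" and g :: "'c \<Rightarrow> 'b::real_normed_vector"
  shows "open U \<Longrightarrow> open V \<Longrightarrow> T ` U \<subseteq> V \<Longrightarrow> smooth_k n U T \<Longrightarrow> smooth_k n V g \<Longrightarrow>
    smooth_k n U (\<lambda>x. g (T x))"
proof (induction n arbitrary: g T)
  case 0
  then show ?case by (auto intro: continuous_on_compose2)
next
  case (Suc n)
  \<comment> \<open>The chain rule, with the inner derivative expanded in the basis of 'c so that D is built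
      from maps whose smoothness is known by induction.\<close>
  define D where "D x v = (\<Sum>b\<in>Basis. (frechet_derivative T (at x) v \<bullet> b) *\<^sub>R
      frechet_derivative g (at (T x)) b)" for x v
  have "((\<lambda>x. g (T x)) has_derivative D x) (at x)" if "x \<in> U" for x
  proof -
    have Tx: "T x \<in> V" using Suc.prems that by blast
    have lin: "linear (frechet_derivative g (at (T x)))"
      using smooth_k_Suc_has_derivative[OF Suc.prems(5) Tx] has_derivative_linear by blast
    have "frechet_derivative g (at (T x)) w
        = (\<Sum>b\<in>Basis. (w \<bullet> b) *\<^sub>R frechet_derivative g (at (T x)) b)" for w
      by (subst euclidean_representation[of w, symmetric]) (simp add: linear_sum[OF lin] linear_scale[OF lin])
    then show ?thesis
      unfolding D_def
      by (intro has_derivative_eq_rhs[OF has_derivative_compose[OF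
            smooth_k_Suc_has_derivative[OF Suc.prems(4) that]
            smooth_k_Suc_has_derivative[OF Suc.prems(5) Tx]]] ext)
  qed
  moreover have "smooth_k n U (\<lambda>x. D x v)" for v
    unfolding D_def
  proof (intro smooth_k_sum[OF Suc.prems(1)] finite_Basis
      smooth_k_bounded_bilinear[OF Suc.prems(1) bounded_bilinear_scaleR])
    fix b :: 'c
    show "smooth_k n U (\<lambda>x. frechet_derivative T (at x) v \<bullet> b)"
      using Suc.prems by (auto intro!: smooth_k_bounded_linear[OF _ bounded_linear_inner_left])
    have "smooth_k n V (\<lambda>y. frechet_derivative g (at y) b)"
      using Suc.prems(5) by simp
    then show "smooth_k n U (\<lambda>x. frechet_derivative g (at (T x)) b)"
      by (rule Suc.IH[OF Suc.prems(1-3) smooth_k_Suc_imp_smooth_k[OF Suc.prems(4)]])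
  qed
  ultimately show ?case by (rule smooth_k_SucI[OF Suc.prems(1)])
qed

section \<open>Smooth maps on arbitrary sets\<close>

lemma smooth_onE:
  assumes "smooth_on S f" "x \<in> S"
  obtains U g where "open U" "x \<in> U" "\<And>n. smooth_k n U g" "\<And>y. y \<in> S \<Longrightarrow> y \<in> U \<Longrightarrow> g y = f y"
proof -
  obtain U g where "x \<in> U" "smooth_open U g" "\<forall>y\<in>S \<inter> U. g y = f y"
    using assms unfolding smooth_on_def by blast
  then show thesis
    by (intro that[of U g]) (auto simp: smooth_open_def)
qed

lemma smooth_onI:
  assumes "\<And>x. x \<in> S \<Longrightarrow> \<exists>U g. open U \<and> x \<in> U \<and> (\<forall>n. smooth_k n U g) \<and> (\<forall>y\<in>S \<inter> U. g y = f y)"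
  shows "smooth_on S f"
  using assms unfolding smooth_on_def smooth_open_def by fastforce

lemma smooth_on_const: "smooth_on S (\<lambda>x. c)"
  by (rule smooth_onI) (use smooth_k_const[OF open_UNIV] in blast)

lemma smooth_on_continuous_on: "smooth_on S f \<Longrightarrow> continuous_on S f"
  unfolding continuous_on_eq_continuous_within
proof
  fix x assume "smooth_on S f" "x \<in> S"
  obtain U g where U: "open U" "x \<in> U" "\<And>n. smooth_k n U g" "\<And>y. y \<in> S \<Longrightarrow> y \<in> U \<Longrightarrow> g y = f y"
    using smooth_onE[OF \<open>smooth_on S f\<close> \<open>x \<in> S\<close>] by blast
  have "continuous_on U g"
    using U(3)[of 0] by simp
  then have "isCont g x"
    using U(1,2) continuous_on_eq_continuous_at by blast
  then have "continuous (at x within S) g"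
    by (rule continuous_at_imp_continuous_at_within)
  moreover have "openin (top_of_set S) (S \<inter> U)"
    using U(1) by (rule openin_open_Int)
  ultimately show "continuous (at x within S) f"
    by (rule continuous_transform_within_openin) (use U(2,4) \<open>x \<in> S\<close> in auto)
qed

lemma smooth_on_unop:
  fixes S :: "'a::euclidean_space set"
  assumes "smooth_on S f"
    and "\<And>(U :: 'a set) g n. open U \<Longrightarrow> \<forall>m. smooth_k m U g \<Longrightarrow> smooth_k n U (\<lambda>x. F (g x))"
  shows "smooth_on S (\<lambda>x. F (f x))"
proof (rule smooth_onI)
  fix x assume "x \<in> S"
  obtain U g where U: "open U" "x \<in> U" "\<And>n. smooth_k n U g" "\<And>y. y \<in> S \<Longrightarrow> y \<in> U \<Longrightarrow> g y = f y"
    using smooth_onE[OF assms(1) \<open>x \<in> S\<close>] by blast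
  have "smooth_k n U (\<lambda>x. F (g x))" for n
    using U(1,3) by (intro assms(2)) auto
  moreover have "\<forall>y\<in>S \<inter> U. F (g y) = F (f y)"
    using U(4) by simp
  ultimately show "\<exists>U h. open U \<and> x \<in> U \<and> (\<forall>n. smooth_k n U h) \<and> (\<forall>y\<in>S \<inter> U. h y = F (f y))"
    using U(1,2) by (intro exI[of _ U] exI[of _ "\<lambda>x. F (g x)"]) simp
qed

lemma smooth_on_binop:
  fixes S :: "'a::euclidean_space set"
  assumes "smooth_on S f" "smooth_on S g"
    and "\<And>(U :: 'a set) f' g' n. open U \<Longrightarrow> \<forall>m. smooth_k m U f' \<Longrightarrow> \<forall>m. smooth_k m U g' \<Longrightarrow>
      smooth_k n U (\<lambda>x. F (f' x) (g' x))"
  shows "smooth_on S (\<lambda>x. F (f x) (g x))"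
proof (rule smooth_onI)
  fix x assume "x \<in> S"
  obtain U1 f' where U1: "open U1" "x \<in> U1" "\<And>n. smooth_k n U1 f'"
      "\<And>y. y \<in> S \<Longrightarrow> y \<in> U1 \<Longrightarrow> f' y = f y"
    using smooth_onE[OF assms(1) \<open>x \<in> S\<close>] by blast
  obtain U2 g' where U2: "open U2" "x \<in> U2" "\<And>n. smooth_k n U2 g'"
      "\<And>y. y \<in> S \<Longrightarrow> y \<in> U2 \<Longrightarrow> g' y = g y"
    using smooth_onE[OF assms(2) \<open>x \<in> S\<close>] by blast
  have "smooth_k m (U1 \<inter> U2) f'" "smooth_k m (U1 \<inter> U2) g'" for m
    by (rule smooth_k_subset[OF U1(3)] smooth_k_subset[OF U2(3)]; blast)+
  then have "smooth_k n (U1 \<inter> U2) (\<lambda>x. F (f' x) (g' x))" for n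
    using U1(1) U2(1) by (intro assms(3)) auto
  moreover have "\<forall>y\<in>S \<inter> (U1 \<inter> U2). F (f' y) (g' y) = F (f y) (g y)"
    using U1(4) U2(4) by simp
  ultimately show "\<exists>U h. open U \<and> x \<in> U \<and> (\<forall>n. smooth_k n U h) \<and> (\<forall>y\<in>S \<inter> U. h y = F (f y) (g y))"
    using U1(1,2) U2(1,2) by (intro exI[of _ "U1 \<inter> U2"] exI[of _ "\<lambda>x. F (f' x) (g' x)"]) (simp add: open_Int)
qed

lemma smooth_on_bounded_linear: "bounded_linear L \<Longrightarrow> smooth_on S f \<Longrightarrow> smooth_on S (\<lambda>x. L (f x))"
  by (erule smooth_on_unop[where F=L]) (rule smooth_k_bounded_linear; simp)

lemma smooth_on_add:
  assumes "smooth_on S f" "smooth_on S g"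
  shows "smooth_on S (\<lambda>x. f x + g x)"
  by (rule smooth_on_binop[where F="(+)", OF assms]) (rule smooth_k_add; simp)

lemma smooth_on_mult:
  fixes f g :: "_ \<Rightarrow> 'b::real_normed_algebra"
  assumes "smooth_on S f" "smooth_on S g"
  shows "smooth_on S (\<lambda>x. f x * g x)"
  by (rule smooth_on_binop[where F="(*)", OF assms]) (rule smooth_k_mult; simp)

lemma smooth_on_exp:
  fixes f :: "_ \<Rightarrow> complex"
  shows "smooth_on S f \<Longrightarrow> smooth_on S (\<lambda>x. exp (f x))"
  by (erule smooth_on_unop[where F=exp]) (rule smooth_k_exp; simp)

lemma smooth_on_compose:
  fixes T :: "'a::euclidean_space \<Rightarrow> 'c::euclidean_space" and g :: "'c \<Rightarrow> 'b::real_normed_vector"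
  assumes "smooth_on S T" "T ` S \<subseteq> S'" "smooth_on S' g"
  shows "smooth_on S (\<lambda>x. g (T x))"
proof (rule smooth_onI)
  fix x assume "x \<in> S"
  obtain U1 T' where U1: "open U1" "x \<in> U1" "\<And>n. smooth_k n U1 T'"
      "\<And>y. y \<in> S \<Longrightarrow> y \<in> U1 \<Longrightarrow> T' y = T y"
    using smooth_onE[OF assms(1) \<open>x \<in> S\<close>] by blast
  from \<open>x \<in> S\<close> assms(2) have "T x \<in> S'" by blast
  obtain U2 g' where U2: "open U2" "T x \<in> U2" "\<And>n. smooth_k n U2 g'"
      "\<And>y. y \<in> S' \<Longrightarrow> y \<in> U2 \<Longrightarrow> g' y = g y"
    using smooth_onE[OF assms(3) \<open>T x \<in> S'\<close>] by blast
  define U where "U = U1 \<inter> T' -` U2"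
  have "open U"
    unfolding U_def using continuous_open_preimage[OF _ U1(1) U2(1)] U1(3)[of 0] by simp
  moreover have "x \<in> U"
    unfolding U_def using U1 U2 \<open>x \<in> S\<close> by auto
  moreover have "smooth_k n U (\<lambda>x. g' (T' x))" for n
  proof (rule smooth_k_compose[OF \<open>open U\<close> U2(1) _ _ U2(3)])
    show "T' ` U \<subseteq> U2" "smooth_k n U T'"
      by (auto simp: U_def intro!: smooth_k_subset[OF U1(3)])
  qed
  moreover have "\<forall>y\<in>S \<inter> U. g' (T' y) = g (T y)"
    using U1(4) U2(4) assms(2) unfolding U_def by auto
  ultimately show "\<exists>U h. open U \<and> x \<in> U \<and> (\<forall>n. smooth_k n U h) \<and> (\<forall>y\<in>S \<inter> U. h y = g (T y))"
    by (intro exI[of _ U] exI[of _ "\<lambda>x. g' (T' x)"]) simp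
qed

lemma continuous_integer_valued_constant:
  fixes F :: "'a::topological_space \<Rightarrow> real"
  assumes "connected S" "S \<noteq> {}" "continuous_on S F" "\<And>x. x \<in> S \<Longrightarrow> F x \<in> \<int>"
  obtains k :: int where "\<And>x. x \<in> S \<Longrightarrow> F x = of_int k"
proof -
  have "F constant_on S"
  proof (rule continuous_discrete_range_constant[OF assms(1,3)])
    fix x assume "x \<in> S"
    show "\<exists>e>0. \<forall>y. y \<in> S \<and> F y \<noteq> F x \<longrightarrow> e \<le> norm (F y - F x)"
    proof (intro exI[of _ 1] conjI allI impI)
      fix y assume "y \<in> S \<and> F y \<noteq> F x"
      then obtain z :: int where "F y - F x = of_int z" "z \<noteq> 0"
        using assms(4) \<open>x \<in> S\<close> by (metis Ints_cases Ints_diff eq_iff_diff_eq_0 of_int_0)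
      then show "1 \<le> norm (F y - F x)"
        by simp
    qed simp
  qed
  moreover obtain x0 where "x0 \<in> S" using assms(2) by blast
  moreover obtain k where "F x0 = of_int k"
    using assms(4)[OF \<open>x0 \<in> S\<close>] by (rule Ints_cases)
  ultimately show thesis
    using that unfolding constant_on_def by metis
qed

lemma smooth_submanifold_locally_path_connected:
  assumes "smooth_submanifold M TYPE('b::euclidean_space)"
  shows "locally path_connected M"
proof (rule locallyI)
  fix W x assume W: "openin (top_of_set M) W" and "x \<in> W"
  then have "x \<in> M" using openin_imp_subset by blast
  then obtain V C and \<phi> :: "'a \<Rightarrow> 'b" and \<psi> where
    chart: "open V" "x \<in> V" "open C" "homeomorphism (M \<inter> V) C \<phi> \<psi>"
    using assms unfolding smooth_submanifold_def by meson
  have "locally path_connected C"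
    by (rule locally_open_subset[OF locally_path_connected_UNIV])
      (metis chart(3) open_openin subtopology_UNIV)
  moreover have "locally path_connected (M \<inter> V) \<longleftrightarrow> locally path_connected C"
    using chart(4) by (rule homeomorphism_locally) (metis homeomorphic_def homeomorphic_path_connectedness)
  ultimately have lpc: "locally path_connected (M \<inter> V)" by blast
  have "openin (top_of_set (M \<inter> V)) (W \<inter> V)"
    using W by (auto simp: openin_open)
  moreover have "x \<in> W \<inter> V"
    using \<open>x \<in> W\<close> chart(2) by blast
  ultimately obtain U P where U: "openin (top_of_set (M \<inter> V)) U" and
    "path_connected P" "x \<in> U" "U \<subseteq> P" "P \<subseteq> W \<inter> V"
    by (rule locallyE[OF lpc])
  moreover have "openin (top_of_set M) U"
    using openin_trans[OF U] chart(1) by (simp add: openin_open_Int)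
  ultimately show "\<exists>U P. openin (top_of_set M) U \<and> path_connected P \<and> x \<in> U \<and> U \<subseteq> P \<and> P \<subseteq> W"
    by blast
qed

section \<open>Lifting circle-valued maps\<close>

abbreviation exp2pi :: "real \<Rightarrow> complex" where
  "exp2pi t \<equiv> exp (2 * complex_of_real pi * \<i> * complex_of_real t)"

lemma exp2pi_add: "exp2pi (a + b) = exp2pi a * exp2pi b"
  by (simp add: exp_add[symmetric] distrib_left)

lemma exp2pi_minus: "exp2pi (- a) = cnj (exp2pi a)"
  by (simp add: exp_cnj)

lemma norm_exp2pi: "norm (exp2pi t) = 1"
  by (simp add: norm_exp_eq_Re)

lemma exp2pi_eq_1_iff: "exp2pi t = 1 \<longleftrightarrow> t \<in> \<int>"
proof
  assume "exp2pi t = 1"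
  then obtain n :: int where "Im (2 * complex_of_real pi * \<i> * complex_of_real t) = of_int (2 * n) * pi"
    unfolding exp_eq_1 by blast
  then have "t = of_int n" using pi_gt_zero by simp
  then show "t \<in> \<int>" by simp
next
  assume "t \<in> \<int>"
  then obtain n where "t = of_int n" by (rule Ints_cases)
  then show "exp2pi t = 1"
    unfolding exp_eq_1 by (intro conjI exI[of _ n]) simp_all
qed

lemma exp2pi_eq_iff: "exp2pi a = exp2pi b \<longleftrightarrow> a - b \<in> \<int>"
  using exp2pi_add[of "a - b" b] exp2pi_eq_1_iff[of "a - b"] by auto

lemma exp2pi_eq_imp_eq:
  assumes "exp2pi a = exp2pi b" "\<bar>a - b\<bar> < 1"
  shows "a = b"
proof -
  obtain n :: int where n: "a - b = of_int n"
    using assms(1) unfolding exp2pi_eq_iff by (rule Ints_cases)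
  with assms(2) have "\<bar>n\<bar> < 1" by linarith
  with n show ?thesis by simp
qed

lemma exp2pi_Im_div:
  assumes "Re w = 0"
  shows "exp2pi (Im w / (2 * pi)) = exp w"
proof -
  have "2 * complex_of_real pi * \<i> * complex_of_real (Im w / (2 * pi)) = \<i> * complex_of_real (Im w)"
    by (simp add: field_simps)
  also have "\<dots> = w"
    using assms by (simp add: complex_eq_iff)
  finally show ?thesis by (rule arg_cong[where f=exp])
qed

lemma smooth_on_exp2pi: "smooth_on S h \<Longrightarrow> smooth_on S (\<lambda>x. exp2pi (h x))"
  by (rule smooth_on_exp, rule smooth_on_bounded_linear[OF bounded_linear_compose[OF
        bounded_linear_mult_right bounded_linear_of_real]])

lemma exp2pi_Ln_div:
  assumes "norm z = 1"
  shows "exp2pi (Im (Ln z) / (2 * pi)) = z"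
proof -
  have "z \<noteq> 0" using assms by auto
  then have "Re (Ln z) = 0" using assms by simp
  then show ?thesis using exp2pi_Im_div exp_Ln[OF \<open>z \<noteq> 0\<close>] by simp
qed

lemma continuous_lift_exp2pi:
  fixes S :: "'a::real_normed_vector set"
  assumes "locally path_connected S" "simply_connected S"
    and "continuous_on S f" "\<And>x. x \<in> S \<Longrightarrow> norm (f x) = 1"
  obtains h where "continuous_on S h" "\<And>x. x \<in> S \<Longrightarrow> f x = exp2pi (h x)"
proof -
  have "f x \<noteq> 0" if "x \<in> S" for x
    using assms(4)[OF that] by auto
  then obtain g where g: "continuous_on S g" "\<And>x. x \<in> S \<Longrightarrow> f x = exp (g x)"
    using continuous_logarithm_on_simply_connected[OF assms(3,2,1)] by blast
  have "Re (g x) = 0" if "x \<in> S" for x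
    using assms(4)[OF that] g(2)[OF that] by (simp add: norm_exp_eq_Re)
  then have "f x = exp2pi (Im (g x) / (2 * pi))" if "x \<in> S" for x
    using g(2) exp2pi_Im_div that by simp
  moreover have "continuous_on S (\<lambda>x. Im (g x) / (2 * pi))"
    by (intro continuous_intros g(1)) auto
  ultimately show thesis
    using that by blast
qed

text \<open>A continuous lift of a smooth circle-valued map is smooth: near x0 it agrees with
  the smooth branch h x0 + arg (f * cnj (f x0)) / 2\<pi>, because both lifts stay within 1/4 of h x0.\<close>

lemma smooth_on_continuous_lift:
  assumes "smooth_on S f" "continuous_on S h" "\<And>x. x \<in> S \<Longrightarrow> f x = exp2pi (h x)"
  shows "smooth_on S h"
proof (rule smooth_onI)
  fix x0 assume "x0 \<in> S"
  obtain U G where U: "open U" "x0 \<in> U" "\<And>n. smooth_k n U G" "\<And>y. y \<in> S \<Longrightarrow> y \<in> U \<Longrightarrow> G y = f y"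
    using smooth_onE[OF assms(1) \<open>x0 \<in> S\<close>] by blast
  define a where "a = cnj (f x0)"
  have norm_f: "norm (f x) = 1" if "x \<in> S" for x
    using assms(3)[OF that] norm_exp2pi by simp
  have "f x0 * a = 1"
    unfolding a_def using complex_norm_square[of "f x0"] norm_f[OF \<open>x0 \<in> S\<close>] by simp
  obtain B where B: "open B" "B \<inter> S = h -` ball (h x0) (1/4) \<inter> S"
    using assms(2) unfolding continuous_on_open_invariant by (meson open_ball)
  define V where "V = U \<inter> (\<lambda>y. G y * a) -` {z. 0 < Re z} \<inter> B"
  have "open V"
  proof -
    have "continuous_on U (\<lambda>y. G y * a)"
      using U(3)[of 0] by (auto intro: continuous_intros)
    moreover have "open {z::complex. 0 < Re z}"
      by (intro open_Collect_less continuous_intros)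
    ultimately show ?thesis
      unfolding V_def using continuous_open_preimage U(1) B(1) by blast
  qed
  moreover have "x0 \<in> V"
  proof -
    have "G x0 * a = 1" using U(2,4) \<open>x0 \<in> S\<close> \<open>f x0 * a = 1\<close> by simp
    then have "G x0 * a \<in> {z. 0 < Re z}" by simp
    moreover have "x0 \<in> B" using B(2) \<open>x0 \<in> S\<close> by auto
    ultimately show ?thesis unfolding V_def using U(2) by blast
  qed
  define H where "H y = h x0 + Im (Ln (G y * a)) / (2 * pi)" for y
  have "smooth_k n V H" for n
  proof -
    have "smooth_k n V (\<lambda>y. G y * a)"
      using \<open>open V\<close> smooth_k_subset[OF U(3), of V] by (intro smooth_k_mult smooth_k_const) (auto simp: V_def)
    then have "smooth_k n V (\<lambda>y. Ln (G y * a))"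
      by (rule smooth_k_Ln[OF \<open>open V\<close>]) (auto simp: V_def complex_nonpos_Reals_iff)
    then show ?thesis
      unfolding H_def using \<open>open V\<close>
      by (intro smooth_k_add smooth_k_const smooth_k_bounded_linear[where L="\<lambda>z. Im z / (2 * pi)"])
        (auto intro: bounded_linear_compose[OF bounded_linear_divide bounded_linear_Im])
  qed
  moreover have "H y = h y" if "y \<in> S" "y \<in> V" for y
  proof (rule exp2pi_eq_imp_eq)
    define z where "z = f y * a"
    have "G y = f y" using U(4) \<open>y \<in> S\<close> \<open>y \<in> V\<close> by (simp add: V_def)
    then have "0 < Re z" using \<open>y \<in> V\<close> by (simp add: V_def z_def)
    have "norm z = 1"
      unfolding z_def a_def using norm_f \<open>x0 \<in> S\<close> \<open>y \<in> S\<close> by (simp add: norm_mult)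
    have "exp2pi (H y) = f x0 * z"
      unfolding H_def exp2pi_add \<open>G y = f y\<close> z_def[symmetric]
      using exp2pi_Ln_div[OF \<open>norm z = 1\<close>] assms(3)[OF \<open>x0 \<in> S\<close>] by simp
    also have "\<dots> = f y"
      unfolding z_def using \<open>f x0 * a = 1\<close> by (simp add: mult_ac)
    finally show "exp2pi (H y) = exp2pi (h y)"
      using assms(3)[OF \<open>y \<in> S\<close>] by simp
    have "\<bar>H y - h x0\<bar> < 1/4"
      using Re_Ln_pos_lt_imp[OF \<open>0 < Re z\<close>] pi_gt_zero
      by (simp add: H_def \<open>G y = f y\<close> z_def abs_divide field_simps)
    moreover have "\<bar>h y - h x0\<bar> < 1/4"
      using B(2) \<open>y \<in> S\<close> \<open>y \<in> V\<close> by (auto simp: V_def dist_real_def abs_minus_commute)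
    ultimately show "\<bar>H y - h y\<bar> < 1" by linarith
  qed
  ultimately show "\<exists>V H. open V \<and> x0 \<in> V \<and> (\<forall>n. smooth_k n V H) \<and> (\<forall>y\<in>S \<inter> V. H y = h y)"
    using \<open>x0 \<in> V\<close> by blast
qed

lemma smooth_lift_exists:
  assumes "locally path_connected S" "simply_connected S" "f \<in> H0_U1 S"
  shows "\<exists>h. is_lift S f h"
proof -
  have "smooth_on S f" "\<And>x. x \<in> S \<Longrightarrow> norm (f x) = 1"
    using assms(3) unfolding H0_U1_def by auto
  then obtain h where "continuous_on S h" "\<And>x. x \<in> S \<Longrightarrow> f x = exp2pi (h x)"
    using continuous_lift_exp2pi[OF assms(1,2) smooth_on_continuous_on] by blast
  then show ?thesis
    unfolding is_lift_def using smooth_on_continuous_lift \<open>smooth_on S f\<close> by blast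
qed

lemma lifts_differ_by_integer:
  assumes "connected S" "S \<noteq> {}" "is_lift S f h" "is_lift S f h'"
  obtains c :: int where "\<And>x. x \<in> S \<Longrightarrow> h x - h' x = of_int c"
proof (rule continuous_integer_valued_constant[OF assms(1,2)])
  show "continuous_on S (\<lambda>x. h x - h' x)"
    using assms(3,4) unfolding is_lift_def by (intro continuous_on_diff smooth_on_continuous_on) auto
  show "h x - h' x \<in> \<int>" if "x \<in> S" for x
    using assms(3,4) that unfolding is_lift_def by (simp flip: exp2pi_eq_iff)
qed (rule that)

section \<open>The invariant epsilon\<close>

lemma real_map_mult: "real_map \<tau> (\<lambda>x. g1 x * g2 x) = (\<lambda>x. real_map \<tau> g1 x * real_map \<tau> g2 x)"
  unfolding real_map_def by (simp add: mult_ac)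

lemma eps_zero_or_one: "eps S \<tau> f \<in> {0, 1}"
  unfolding eps_def by auto

locale real_manifold =
  fixes M :: "'a::euclidean_space set" and \<tau> :: "'a \<Rightarrow> 'a"
  assumes nonempty: "M \<noteq> {}"
    and connected: "connected M"
    and simply_connected: "simply_connected M"
    and locally_path_connected: "locally path_connected M"
    and involution: "smooth_involution M \<tau>"
begin

lemma tau_in: "x \<in> M \<Longrightarrow> \<tau> x \<in> M"
  using involution unfolding smooth_involution_def by blast

lemma tau_tau: "x \<in> M \<Longrightarrow> \<tau> (\<tau> x) = x"
  using involution unfolding smooth_involution_def by blast

lemma smooth_on_tau_compose: "smooth_on M g \<Longrightarrow> smooth_on M (\<lambda>x. g (\<tau> x))"
  using involution tau_in unfolding smooth_involution_def by (blast intro: smooth_on_compose)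

lemma lift_exists: "f \<in> H0_U1 M \<Longrightarrow> \<exists>h. is_lift M f h"
  by (rule smooth_lift_exists[OF locally_path_connected simply_connected])

lemma lift_sum_tau_integer:
  assumes "f \<in> H0_real M \<tau>" "is_lift M f h"
  shows "\<exists>k::int. \<forall>x\<in>M. h (\<tau> x) + h x = of_int k"
proof -
  have "continuous_on M h"
    using assms(2) smooth_on_continuous_on unfolding is_lift_def by blast
  moreover have "continuous_on M (\<lambda>x. h (\<tau> x))"
    using assms(2) smooth_on_continuous_on smooth_on_tau_compose unfolding is_lift_def by blast
  moreover have "h (\<tau> x) + h x \<in> \<int>" if "x \<in> M" for x
  proof -
    have "exp2pi (h (\<tau> x)) = f (\<tau> x)"
      using assms(2) tau_in[OF that] unfolding is_lift_def by simp
    also have "\<dots> = cnj (f x)"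
      using assms(1) that unfolding H0_real_def by simp
    also have "\<dots> = exp2pi (- h x)"
      using assms(2) that unfolding is_lift_def exp2pi_minus by simp
    finally have "h (\<tau> x) - - h x \<in> \<int>"
      by (rule exp2pi_eq_iff[THEN iffD1])
    then show ?thesis by simp
  qed
  ultimately obtain k :: int where "\<And>x. x \<in> M \<Longrightarrow> h (\<tau> x) + h x = of_int k"
    using continuous_integer_valued_constant[OF connected nonempty, of "\<lambda>x. h (\<tau> x) + h x"]
      continuous_on_add by blast
  then show ?thesis by blast
qed

lemma lift_sum_tau_parity:
  assumes "is_lift M f h" "is_lift M f h'"
    and "\<forall>x\<in>M. h (\<tau> x) + h x = of_int k" "\<forall>x\<in>M. h' (\<tau> x) + h' x = of_int k'"
  shows "k mod 2 = k' mod 2"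
proof -
  obtain c :: int where c: "\<And>x. x \<in> M \<Longrightarrow> h x - h' x = of_int c"
    using lifts_differ_by_integer[OF connected nonempty assms(1,2)] by blast
  obtain x where "x \<in> M" using nonempty by blast
  have "h x - h' x = of_int c" "h (\<tau> x) - h' (\<tau> x) = of_int c"
    using c tau_in \<open>x \<in> M\<close> by auto
  moreover have "h (\<tau> x) + h x = of_int k" "h' (\<tau> x) + h' x = of_int k'"
    using assms(3,4) \<open>x \<in> M\<close> by auto
  ultimately have "real_of_int k = of_int k' + 2 * of_int c" by linarith
  then have "k = k' + 2 * c" by linarith
  then show ?thesis by simp
qed

lemma eps_eq:
  assumes "is_lift M f h" "\<forall>x\<in>M. h (\<tau> x) + h x = of_int k"
  shows "eps M \<tau> f = k mod 2"
proof -
  define k0 where "k0 = (SOME k::int. \<exists>h. is_lift M f h \<and> (\<forall>x\<in>M. h (\<tau> x) + h x = of_int k))"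
  have "\<exists>h. is_lift M f h \<and> (\<forall>x\<in>M. h (\<tau> x) + h x = of_int k0)"
    unfolding k0_def by (rule someI_ex) (use assms in blast)
  then have "k0 mod 2 = k mod 2"
    using lift_sum_tau_parity assms by blast
  then show ?thesis
    unfolding eps_def k0_def .
qed

lemma real_map_in_H0_real:
  assumes "g \<in> H0_U1 M"
  shows "real_map \<tau> g \<in> H0_real M \<tau>"
proof -
  have "smooth_on M g" and norm_g: "\<And>x. x \<in> M \<Longrightarrow> norm (g x) = 1"
    using assms unfolding H0_U1_def by auto
  then have "smooth_on M (\<lambda>x. cnj (g x) * g (\<tau> x))"
    by (intro smooth_on_mult smooth_on_bounded_linear[OF bounded_linear_cnj] smooth_on_tau_compose)
  moreover have "norm (cnj (g x) * g (\<tau> x)) = 1" if "x \<in> M" for x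
    using norm_g[OF that] norm_g[OF tau_in[OF that]] by (simp add: norm_mult)
  moreover have "cnj (g (\<tau> x)) * g (\<tau> (\<tau> x)) = cnj (cnj (g x) * g (\<tau> x))" if "x \<in> M" for x
    using tau_tau[OF that] by (simp add: mult.commute)
  ultimately show ?thesis
    unfolding H0_real_def H0_U1_def real_map_def by auto
qed

lemma eps_mult:
  assumes "f1 \<in> H0_real M \<tau>" "f2 \<in> H0_real M \<tau>"
  shows "eps M \<tau> (\<lambda>x. f1 x * f2 x) = (eps M \<tau> f1 + eps M \<tau> f2) mod 2"
proof -
  obtain h1 h2 where h: "is_lift M f1 h1" "is_lift M f2 h2"
    using lift_exists assms unfolding H0_real_def by blast
  obtain k1 k2 where k: "\<forall>x\<in>M. h1 (\<tau> x) + h1 x = of_int k1" "\<forall>x\<in>M. h2 (\<tau> x) + h2 x = of_int k2"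
    using lift_sum_tau_integer assms h by meson
  have "f1 x * f2 x = exp2pi (h1 x + h2 x)" if "x \<in> M" for x
    using h that unfolding is_lift_def exp2pi_add by simp
  then have "is_lift M (\<lambda>x. f1 x * f2 x) (\<lambda>x. h1 x + h2 x)"
    using h unfolding is_lift_def by (simp add: smooth_on_add)
  moreover have "\<forall>x\<in>M. (h1 (\<tau> x) + h2 (\<tau> x)) + (h1 x + h2 x) = of_int (k1 + k2)"
    using k unfolding of_int_add by force
  ultimately have "eps M \<tau> (\<lambda>x. f1 x * f2 x) = (k1 + k2) mod 2"
    by (rule eps_eq)
  also have "\<dots> = (eps M \<tau> f1 + eps M \<tau> f2) mod 2"
    using eps_eq[OF h(1) k(1)] eps_eq[OF h(2) k(2)] by (simp add: mod_add_eq)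
  finally show ?thesis .
qed

lemma real_map_eq_1_iff:
  assumes "g \<in> H0_U1 M"
  shows "(\<forall>x\<in>M. real_map \<tau> g x = 1) \<longleftrightarrow> g \<in> H0_inv M \<tau>"
proof -
  have "cnj (g x) * g x = 1" if "x \<in> M" for x
    using assms that complex_norm_square[of "g x"] unfolding H0_U1_def by (simp add: mult.commute)
  then have "real_map \<tau> g x = 1 \<longleftrightarrow> g (\<tau> x) = g x" if "x \<in> M" for x
    unfolding real_map_def using that by (metis mult.left_commute mult_1_right mult_cancel_left zero_neq_one mult_zero_left)
  then show ?thesis
    using assms unfolding H0_inv_def by auto
qed

text \<open>If h \<circ> \<tau> + h = 2m, then g = exp2pi \<circ> b with b = (m - h) / 2 satisfies f = cnj g \<cdot> (g \<circ> \<tau>).\<close>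

lemma eps_eq_0_imp_real_map:
  assumes "f \<in> H0_real M \<tau>" "eps M \<tau> f = 0"
  shows "\<exists>g\<in>H0_U1 M. \<forall>x\<in>M. f x = real_map \<tau> g x"
proof -
  obtain h where h: "is_lift M f h"
    using lift_exists assms(1) unfolding H0_real_def by blast
  then obtain k where k: "\<forall>x\<in>M. h (\<tau> x) + h x = of_int k"
    using lift_sum_tau_integer assms(1) by blast
  then obtain m where m: "k = 2 * m"
    using eps_eq[OF h k] assms(2) by auto
  define b where "b x = of_int m / 2 + (- 1 / 2) * h x" for x
  define g where "g x = exp2pi (b x)" for x
  have "smooth_on M h"
    using h unfolding is_lift_def by blast
  then have "smooth_on M b"
    unfolding b_def
    by (intro smooth_on_add smooth_on_const smooth_on_bounded_linear[OF bounded_linear_mult_right])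
  then have "g \<in> H0_U1 M"
    unfolding H0_U1_def g_def using smooth_on_exp2pi norm_exp2pi by blast
  moreover have "f x = real_map \<tau> g x" if "x \<in> M" for x
  proof -
    have "h (\<tau> x) + h x = 2 * of_int m"
      using k that m by simp
    then have "- b x + b (\<tau> x) = h x + of_int (- m)"
      unfolding b_def of_int_minus by linarith
    then have "real_map \<tau> g x = exp2pi (h x + of_int (- m))"
      unfolding real_map_def g_def exp2pi_minus[symmetric] exp2pi_add[symmetric] by simp
    also have "\<dots> = f x"
      using h that exp2pi_eq_iff[of "h x + of_int (- m)" "h x"] unfolding is_lift_def by simp
    finally show ?thesis by simp
  qed
  ultimately show ?thesis by blast
qed

lemma real_map_eps_eq_0:
  assumes "g \<in> H0_U1 M" "\<forall>x\<in>M. f x = real_map \<tau> g x"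
  shows "eps M \<tau> f = 0"
proof -
  obtain a where a: "is_lift M g a"
    using lift_exists assms(1) by blast
  define h where "h x = a (\<tau> x) + - a x" for x
  have "smooth_on M a"
    using a unfolding is_lift_def by blast
  then have "smooth_on M h"
    unfolding h_def by (intro smooth_on_add smooth_on_tau_compose
        smooth_on_bounded_linear[OF bounded_linear_minus[OF bounded_linear_ident]])
  moreover have "f x = exp2pi (h x)" if "x \<in> M" for x
  proof -
    have "exp2pi (h x) = g (\<tau> x) * cnj (g x)"
      using a that tau_in[OF that] unfolding is_lift_def h_def exp2pi_add exp2pi_minus by simp
    then show ?thesis
      using assms(2) that unfolding real_map_def by (simp add: mult.commute)
  qed
  ultimately have "is_lift M f h"
    unfolding is_lift_def by blast
  moreover have "\<forall>x\<in>M. h (\<tau> x) + h x = of_int 0"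
    unfolding h_def using tau_tau by simp
  ultimately show ?thesis
    using eps_eq by fastforce
qed

lemma minus_one_in_H0_real: "(\<lambda>x. - 1) \<in> H0_real M \<tau>"
  unfolding H0_real_def H0_U1_def by (simp add: smooth_on_const)

lemma eps_minus_one: "eps M \<tau> (\<lambda>x. - 1) = 1"
proof -
  have "exp2pi (1 / 2) = - 1"
    by (simp add: exp_pi_i')
  then have "is_lift M (\<lambda>x. - 1) (\<lambda>x. 1 / 2)"
    unfolding is_lift_def by (simp add: smooth_on_const)
  moreover have "\<forall>x\<in>M. 1 / 2 + 1 / 2 = (of_int 1 :: real)" by simp
  ultimately show ?thesis
    using eps_eq by fastforce
qed

end

theorem mainTheorem2:
  fixes M :: "'a::euclidean_space set" and \<tau> :: "'a \<Rightarrow> 'a"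
  assumes "smooth_submanifold M TYPE('b::euclidean_space)"
    and "smooth_involution M \<tau>"
    and "M \<noteq> {}" and "connected M" and "simply_connected M"
  shows
    \<comment> \<open>epsilon is well defined\<close>
    "(\<forall>f\<in>H0_real M \<tau>. (\<exists>h. is_lift M f h) \<and>
        (\<forall>h. is_lift M f h \<longrightarrow> (\<exists>k::int. \<forall>x\<in>M. h (\<tau> x) + h x = of_int k)) \<and>
        (\<forall>h h' k k'. is_lift M f h \<and> is_lift M f h' \<and>
            (\<forall>x\<in>M. h (\<tau> x) + h x = of_int k) \<and> (\<forall>x\<in>M. h' (\<tau> x) + h' x = of_int k')
            \<longrightarrow> k mod 2 = k' mod 2))
   \<and> \<comment> \<open>the maps are well-defined homomorphisms\<close>
     H0_inv M \<tau> \<subseteq> H0_U1 M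
   \<and> (\<forall>g\<in>H0_U1 M. real_map \<tau> g \<in> H0_real M \<tau>)
   \<and> (\<forall>g1\<in>H0_U1 M. \<forall>g2\<in>H0_U1 M. real_map \<tau> (\<lambda>x. g1 x * g2 x) = (\<lambda>x. real_map \<tau> g1 x * real_map \<tau> g2 x))
   \<and> (\<forall>f1\<in>H0_real M \<tau>. \<forall>f2\<in>H0_real M \<tau>. eps M \<tau> (\<lambda>x. f1 x * f2 x) = (eps M \<tau> f1 + eps M \<tau> f2) mod 2)
   \<and> \<comment> \<open>exactness at H^0(M,U(1))\<close>
     (\<forall>g\<in>H0_U1 M. (\<forall>x\<in>M. real_map \<tau> g x = 1) \<longleftrightarrow> g \<in> H0_inv M \<tau>)
   \<and> \<comment> \<open>exactness at H^0(M;Z_2,conj U(1))\<close>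
     (\<forall>f\<in>H0_real M \<tau>. eps M \<tau> f = 0 \<longleftrightarrow> (\<exists>g\<in>H0_U1 M. \<forall>x\<in>M. f x = real_map \<tau> g x))
   \<and> \<comment> \<open>surjectivity of epsilon onto Z_2 = {0,1}\<close>
     (\<forall>f\<in>H0_real M \<tau>. eps M \<tau> f \<in> {0, 1})
   \<and> (\<exists>f\<in>H0_real M \<tau>. eps M \<tau> f = 1)"
proof -
  interpret real_manifold M \<tau>
    using assms smooth_submanifold_locally_path_connected[OF assms(1)] by unfold_locales auto
  have "H0_real M \<tau> \<subseteq> H0_U1 M"
    unfolding H0_real_def by blast
  show ?thesis
    apply (intro conjI)
    subgoal using lift_exists lift_sum_tau_integer lift_sum_tau_parity \<open>H0_real M \<tau> \<subseteq> H0_U1 M\<close> by blast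
    subgoal unfolding H0_inv_def by blast
    subgoal using real_map_in_H0_real by blast
    subgoal using real_map_mult by blast
    subgoal using eps_mult by blast
    subgoal using real_map_eq_1_iff by blast
    subgoal using eps_eq_0_imp_real_map real_map_eps_eq_0 by blast
    subgoal using eps_zero_or_one by blast
    subgoal using minus_one_in_H0_real eps_minus_one by blast
    done
qed

end
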